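(* Let $\Gamma$ be a finitely generated residually nilpotent group, let $F$ be a free group of rank $\mathrm{rk}(\Gamma)$ and write $\Gamma = F/K$. Let $G = F/N$ be a weakly para-$\Gamma$ group. (1) If there exists an automorphism $\phi: F\to F$ with $\phi(N) \geq K$ (i.e. $G$ is of Type I), then $G \cong \Gamma$. (2) If there exists an automorphism $\phi: F \to F$ with $\phi(N) \lneq K$ (i.e. $G$ is of Type II), then $G$ is not residually nilpotent; in particular $G$ is not a para-$\Gamma$ group.
   Context: The lower central series is $\gamma_1(G)=G$, $\gamma_k(G)=[G,\gamma_{k-1}(G)]$. A group is residually nilpotent if $\bigcap_k \gamma_k(G)=\{1\}$. $\mathrm{rk}(\Gamma)$ is the minimum size of a generating set of $\Gamma$. For a finitely generated residually nilpotent group $\Gamma$, a group $G$ is weakly para-$\Gamma$ if $G/\gamma_k(G)\cong \Gamma/\gamma_k(\Gamma)$ for all $k\geq 1$; it is para-$\Gamma$ if moreover $G$ is residually nilpotent. *)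

theory Defs
  imports "HOL-Algebra.Algebra"
begin

definition comm_subgroup :: "('a, 'b) monoid_scheme \<Rightarrow> 'a set \<Rightarrow> 'a set" where
  "comm_subgroup G H = generate G {x \<otimes>\<^bsub>G\<^esub> y \<otimes>\<^bsub>G\<^esub> inv\<^bsub>G\<^esub> x \<otimes>\<^bsub>G\<^esub> inv\<^bsub>G\<^esub> y
       | x y. x \<in> carrier G \<and> y \<in> H}"

(* lower central series, indexed as in the paper: gamma G 1 = G,
   gamma G (k+1) = [G, gamma G k]; the value at 0 is set to G as a harmless default *)
fun lcs :: "('a, 'b) monoid_scheme \<Rightarrow> nat \<Rightarrow> 'a set" where
  "lcs G 0 = carrier G"
| "lcs G (Suc 0) = carrier G"
| "lcs G (Suc (Suc k)) = comm_subgroup G (lcs G (Suc k))"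

definition residually_nilpotent :: "('a, 'b) monoid_scheme \<Rightarrow> bool" where
  "residually_nilpotent G \<longleftrightarrow> (\<Inter>k\<in>{1..}. lcs G k) = {\<one>\<^bsub>G\<^esub>}"

definition finitely_generated :: "('a, 'b) monoid_scheme \<Rightarrow> bool" where
  "finitely_generated G \<longleftrightarrow> (\<exists>S. S \<subseteq> carrier G \<and> finite S \<and> generate G S = carrier G)"

definition group_rank :: "('a, 'b) monoid_scheme \<Rightarrow> nat" where
  "group_rank G = (LEAST n. \<exists>S. S \<subseteq> carrier G \<and> finite S \<and> card S = n \<and> generate G S = carrier G)"

definition word_eval :: "('a, 'b) monoid_scheme \<Rightarrow> (bool \<times> 'a) list \<Rightarrow> 'a" where
  "word_eval G w = foldr (\<lambda>(b, s) acc. (if b then inv\<^bsub>G\<^esub> s else s) \<otimes>\<^bsub>G\<^esub> acc) w \<one>\<^bsub>G\<^esub>"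

definition reduced_word :: "(bool \<times> 'a) list \<Rightarrow> bool" where
  "reduced_word w \<longleftrightarrow> (\<forall>i. Suc i < length w \<longrightarrow>
      \<not> (snd (w ! i) = snd (w ! Suc i) \<and> fst (w ! i) \<noteq> fst (w ! Suc i)))"

definition free_basis :: "('a, 'b) monoid_scheme \<Rightarrow> 'a set \<Rightarrow> bool" where
  "free_basis F S \<longleftrightarrow> S \<subseteq> carrier F \<and> generate F S = carrier F \<and>
     (\<forall>w. w \<noteq> [] \<and> set (map snd w) \<subseteq> S \<and> reduced_word w \<longrightarrow> word_eval F w \<noteq> \<one>\<^bsub>F\<^esub>)"

definition free_group_of_rank :: "('a, 'b) monoid_scheme \<Rightarrow> nat \<Rightarrow> bool" where
  "free_group_of_rank F r \<longleftrightarrow> group F \<and> (\<exists>S. free_basis F S \<and> finite S \<and> card S = r)"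

definition weakly_para :: "('g, 'c) monoid_scheme \<Rightarrow> ('h, 'd) monoid_scheme \<Rightarrow> bool" where
  "weakly_para \<Gamma> G \<longleftrightarrow> (\<forall>k\<ge>1. G Mod (lcs G k) \<cong> \<Gamma> Mod (lcs \<Gamma> k))"

definition para :: "('g, 'c) monoid_scheme \<Rightarrow> ('h, 'd) monoid_scheme \<Rightarrow> bool" where
  "para \<Gamma> G \<longleftrightarrow> weakly_para \<Gamma> G \<and> residually_nilpotent G"

end

theory Submission
  imports Defs
begin

text \<open>
  The key fact is: if \<open>H\<close> is finitely generated, \<open>f : H \<rightarrow> H'\<close> is surjective and
  \<open>H/\<gamma>\<^sub>k(H) \<cong> H'/\<gamma>\<^sub>k(H')\<close>, then \<open>ker f \<subseteq> \<gamma>\<^sub>k(H)\<close>.  Indeed \<open>f\<close> induces a surjection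
  \<open>H/\<gamma>\<^sub>k(H) \<rightarrow> H'/\<gamma>\<^sub>k(H')\<close>; composed with the isomorphism back, this is a surjective
  endomorphism of the finitely generated nilpotent group \<open>H/\<gamma>\<^sub>k(H)\<close>, which is injective
  because such groups are Noetherian (ascending chains of subgroups stabilise), hence Hopfian.

  Finally an automorphism \<open>\<phi>\<close>
  of \<open>F\<close> with \<open>K \<subseteq> \<phi>(N)\<close> yields a surjection \<open>\<Gamma> \<rightarrow> G\<close>, whose kernel lies in
  \<open>\<Inter>\<^sub>k \<gamma>\<^sub>k(\<Gamma>) = 1\<close>; and \<open>\<phi>(N) \<subset> K\<close> yields a surjection \<open>G \<rightarrow> \<Gamma>\<close> with a nontrivial
  kernel inside \<open>\<Inter>\<^sub>k \<gamma>\<^sub>k(G)\<close>.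
\<close>

lemma int_subtraction_closed_multiples:
  fixes J :: "int set"
  assumes zero: "0 \<in> J" and diff: "\<And>a b. a \<in> J \<Longrightarrow> b \<in> J \<Longrightarrow> a - b \<in> J" and x: "x \<in> J"
  shows "x * k \<in> J"
proof -
  have neg: "- a \<in> J" if "a \<in> J" for a using diff[OF zero that] by simp
  have add: "a + b \<in> J" if "a \<in> J" "b \<in> J" for a b using diff[OF that(1) neg[OF that(2)]] by simp
  have nat: "x * int n \<in> J" for n
    by (induction n) (auto simp: zero algebra_simps add x)
  show ?thesis
  proof (cases "k \<ge> 0")
    case True thus ?thesis using nat[of "nat k"] by simp
  next
    case False thus ?thesis using neg[OF nat[of "nat (-k)"]] by simp
  qed
qed

lemma int_subgroup_cyclic:
  fixes J :: "int set"
  assumes zero: "0 \<in> J" and diff: "\<And>a b. a \<in> J \<Longrightarrow> b \<in> J \<Longrightarrow> a - b \<in> J"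
  shows "\<exists>d. J = range ((*) d)"
proof (cases "J = {0}")
  case True thus ?thesis by (intro exI[of _ 0]) auto
next
  case False
  then obtain a where a: "a \<in> J" "a \<noteq> 0" using zero by blast
  have "\<bar>a\<bar> \<in> J" using a diff[OF zero a(1)] by (cases "a \<ge> 0") auto
  hence ex: "\<exists>p::nat. p > 0 \<and> int p \<in> J" using a(2) by (intro exI[of _ "nat \<bar>a\<bar>"]) auto
  define d where "d = (LEAST p::nat. p > 0 \<and> int p \<in> J)"
  have d: "d > 0" "int d \<in> J" using LeastI_ex[OF ex] unfolding d_def by auto
  have d_min: "d \<le> p" if "p > 0" "int p \<in> J" for p
    unfolding d_def using that by (intro Least_le) blast
  have "u \<in> range ((*) (int d))" if u: "u \<in> J" for u
  proof -
    have "u mod int d = u - int d * (u div int d)" by (simp add: minus_div_mult_eq_mod[symmetric] mult.commute)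
    also have "\<dots> \<in> J" using diff[OF u int_subtraction_closed_multiples[OF zero diff d(2)]] .
    finally have "u mod int d \<in> J" .
    moreover have "0 \<le> u mod int d" "u mod int d < int d" using d(1) by simp_all
    ultimately have "u mod int d = 0" using d_min[of "nat (u mod int d)"] by fastforce
    thus ?thesis by (metis dvd_def mod_0_imp_dvd rangeI)
  qed
  moreover have "range ((*) (int d)) \<subseteq> J"
    using int_subtraction_closed_multiples[OF zero diff d(2)] by auto
  ultimately show ?thesis by blast
qed

text \<open>Ascending chains of subgroups of \<open>\<int>\<close> stabilise: the union is generated by a single
  element, which already lies in some member of the chain.\<close>

lemma int_subgroup_chain_stable:
  fixes I :: "nat \<Rightarrow> int set"
  assumes zero: "\<And>n. 0 \<in> I n" and diff: "\<And>n a b. a \<in> I n \<Longrightarrow> b \<in> I n \<Longrightarrow> a - b \<in> I n"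
    and up: "\<And>n. I n \<subseteq> I (Suc n)"
  shows "\<exists>m. \<forall>n\<ge>m. I n = I m"
proof -
  have mono: "I i \<subseteq> I j" if "i \<le> j" for i j using lift_Suc_mono_le[of I, OF up that] .
  define U where "U = (\<Union>n. I n)"
  have U0: "0 \<in> U" using zero U_def by blast
  have "a - b \<in> U" if ab: "a \<in> U" "b \<in> U" for a b
  proof -
    obtain i j where "a \<in> I i" "b \<in> I j" using ab U_def by blast
    hence "a \<in> I (max i j)" "b \<in> I (max i j)" using mono by (meson max.cobounded1 max.cobounded2 subsetD)+
    thus ?thesis using diff U_def by blast
  qed
  then obtain d where d: "U = range ((*) d)" using int_subgroup_cyclic[OF U0] by blast
  then obtain m where m: "d \<in> I m" unfolding U_def by (metis UN_E mult.right_neutral rangeI)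
  have "I n \<subseteq> I m" for n
  proof
    fix u assume "u \<in> I n"
    then obtain k where "u = d * k" using d U_def by blast
    thus "u \<in> I m" using int_subtraction_closed_multiples[OF zero diff m] by simp
  qed
  thus ?thesis using mono by blast
qed

text \<open>A group is Noetherian iff \<open>acc_interval G {\<one>} (carrier G)\<close>.\<close>

definition acc_interval :: "('a, 'b) monoid_scheme \<Rightarrow> 'a set \<Rightarrow> 'a set \<Rightarrow> bool" where
  "acc_interval G B A \<longleftrightarrow> (\<forall>S :: nat \<Rightarrow> 'a set.
      (\<forall>n. subgroup (S n) G \<and> B \<subseteq> S n \<and> S n \<subseteq> A \<and> S n \<subseteq> S (Suc n)) \<longrightarrow> (\<exists>m. \<forall>n\<ge>m. S n = S m))"

lemma acc_intervalI:
  assumes "\<And>S. (\<And>n. subgroup (S n) G) \<Longrightarrow> (\<And>n. B \<subseteq> S n) \<Longrightarrow> (\<And>n. S n \<subseteq> A)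
     \<Longrightarrow> (\<And>n. S n \<subseteq> S (Suc n)) \<Longrightarrow> \<exists>m. \<forall>n\<ge>m. S n = S m"
  shows "acc_interval G B A"
  using assms unfolding acc_interval_def by blast

lemma acc_intervalD:
  assumes "acc_interval G B A" "\<And>n. subgroup (S n) G" "\<And>n. B \<subseteq> S n" "\<And>n. S n \<subseteq> A"
    "\<And>n. S n \<subseteq> S (Suc n)"
  shows "\<exists>m. \<forall>n\<ge>m. S n = S m"
  using assms unfolding acc_interval_def by blast

lemma acc_interval_refl: "acc_interval G A A"
  unfolding acc_interval_def by (metis order_antisym le_refl)

context group
begin

lemma inv_mult_cancel [simp]: "x \<in> carrier G \<Longrightarrow> y \<in> carrier G \<Longrightarrow> inv x \<otimes> (x \<otimes> y) = y"
  by (simp add: m_assoc[symmetric])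

lemma mult_inv_cancel [simp]: "x \<in> carrier G \<Longrightarrow> y \<in> carrier G \<Longrightarrow> x \<otimes> (inv x \<otimes> y) = y"
  by (simp add: m_assoc[symmetric])

lemma mult_normalized_subgroup:
  assumes S: "subgroup S G" and C: "subgroup C G"
    and normalized: "\<And>s c. s \<in> S \<Longrightarrow> c \<in> C \<Longrightarrow> s \<otimes> c \<otimes> inv s \<in> C"
  shows "subgroup (S <#> C) G"
proof (rule subgroupI)
  have Sc: "S \<subseteq> carrier G" and Cc: "C \<subseteq> carrier G" using S C subgroup.subset by auto
  show "S <#> C \<subseteq> carrier G" using Sc Cc by (auto simp: set_mult_def)
  show "S <#> C \<noteq> {}"
    using subgroup.one_closed[OF S] subgroup.one_closed[OF C] by (auto simp: set_mult_def)
next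
  fix x assume "x \<in> S <#> C"
  then obtain s c where sc: "x = s \<otimes> c" "s \<in> S" "c \<in> C" by (auto simp: set_mult_def)
  have car: "s \<in> carrier G" "c \<in> carrier G"
    using subgroup.mem_carrier[OF S sc(2)] subgroup.mem_carrier[OF C sc(3)] by auto
  have "inv x = inv s \<otimes> (s \<otimes> inv c \<otimes> inv s)"
    using car sc by (simp add: inv_mult_group m_assoc)
  moreover have "s \<otimes> inv c \<otimes> inv s \<in> C" using normalized sc subgroup.m_inv_closed[OF C] by blast
  ultimately show "inv x \<in> S <#> C" using subgroup.m_inv_closed[OF S sc(2)] by (auto simp: set_mult_def)
next
  fix x y assume "x \<in> S <#> C" "y \<in> S <#> C"
  then obtain s c s' c' where sc: "x = s \<otimes> c" "s \<in> S" "c \<in> C" "y = s' \<otimes> c'" "s' \<in> S" "c' \<in> C"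
    by (auto simp: set_mult_def)
  have car: "s \<in> carrier G" "c \<in> carrier G" "s' \<in> carrier G" "c' \<in> carrier G"
    using subgroup.mem_carrier[OF S sc(2)] subgroup.mem_carrier[OF C sc(3)]
      subgroup.mem_carrier[OF S sc(5)] subgroup.mem_carrier[OF C sc(6)] by auto
  define d where "d = inv s' \<otimes> c \<otimes> s'"
  have "x \<otimes> y = (s \<otimes> s') \<otimes> (d \<otimes> c')" using car sc by (simp add: d_def m_assoc)
  moreover have "d \<in> C" using normalized[of "inv s'" c] sc subgroup.m_inv_closed[OF S] car
    by (simp add: d_def)
  ultimately show "x \<otimes> y \<in> S <#> C"
    using sc subgroup.m_closed[OF S sc(2,5)] subgroup.m_closed[OF C \<open>d \<in> C\<close> sc(6)]
    unfolding set_mult_def by blast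
qed

lemma subgroup_subset_mult:
  assumes S: "subgroup S G" and C: "subgroup C G"
  shows "S \<subseteq> S <#> C" and "C \<subseteq> S <#> C"
proof
  fix s assume s: "s \<in> S"
  have "s = s \<otimes> \<one>" using subgroup.mem_carrier[OF S s] by simp
  thus "s \<in> S <#> C" using s subgroup.one_closed[OF C] unfolding set_mult_def by blast
next
  show "C \<subseteq> S <#> C"
  proof
    fix c assume c: "c \<in> C"
    have "c = \<one> \<otimes> c" using subgroup.mem_carrier[OF C c] by simp
    thus "c \<in> S <#> C" using c subgroup.one_closed[OF S] unfolding set_mult_def by blast
  qed
qed

lemma generate_insert_subset_mult:
  assumes A': "subgroup A' G" and t: "t \<in> carrier G" and Y: "Y \<subseteq> A'"
    and normalized: "\<And>d c. d \<in> generate G {t} \<Longrightarrow> c \<in> A' \<Longrightarrow> d \<otimes> c \<otimes> inv d \<in> A'"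
  shows "generate G (insert t Y) \<subseteq> generate G {t} <#> A'"
proof (rule generate_subgroup_incl)
  have cyclic: "subgroup (generate G {t}) G" using t by (intro generate_is_subgroup) auto
  show "subgroup (generate G {t} <#> A') G"
    using mult_normalized_subgroup[OF cyclic A'] normalized by blast
  have "t \<in> generate G {t}" by (rule generate.incl) simp
  thus "insert t Y \<subseteq> generate G {t} <#> A'"
    using Y subgroup_subset_mult[OF cyclic A'] by blast
qed

text \<open>A modular-law argument: a subgroup \<open>S\<close> is determined inside a larger subgroup \<open>S'\<close>
  by its product with and its intersection with a fixed subgroup \<open>C\<close>.\<close>

lemma subgroup_eq_by_mult_and_inter:
  assumes S: "subgroup S G" and S': "subgroup S' G" and C: "subgroup C G" and "S \<subseteq> S'"
    and mult: "S' <#> C \<subseteq> S <#> C" and inter: "S' \<inter> C \<subseteq> S \<inter> C"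
  shows "S' = S"
proof
  show "S' \<subseteq> S"
  proof
    fix x assume x: "x \<in> S'"
    have "x = x \<otimes> \<one>" using subgroup.mem_carrier[OF S' x] by simp
    hence "x \<in> S' <#> C" using x subgroup.one_closed[OF C] unfolding set_mult_def by blast
    hence "x \<in> S <#> C" using mult by blast
    then obtain s c where sc: "x = s \<otimes> c" "s \<in> S" "c \<in> C" by (auto simp: set_mult_def)
    have "c = inv s \<otimes> x"
      using sc subgroup.mem_carrier[OF S sc(2)] subgroup.mem_carrier[OF C sc(3)] by (simp add: m_assoc[symmetric])
    hence "c \<in> S'" using x sc \<open>S \<subseteq> S'\<close> subgroup.m_closed[OF S'] subgroup.m_inv_closed[OF S'] by blast
    hence "c \<in> S" using inter sc by blast
    thus "x \<in> S" using sc subgroup.m_closed[OF S] by simp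
  qed
qed fact

text \<open>Chain conditions compose along a subgroup \<open>C\<close> normalised by \<open>A\<close>: a chain \<open>S\<^sub>n\<close> in
  \<open>[B, A]\<close> stabilises once both \<open>S\<^sub>n C\<close> (in \<open>[C, A]\<close>) and \<open>S\<^sub>n \<inter> C\<close> (in \<open>[B, C]\<close>) do.\<close>

lemma acc_interval_extension:
  assumes A: "subgroup A G" and C: "subgroup C G" and BC: "B \<subseteq> C" and CA: "C \<subseteq> A"
    and normalized: "\<And>a c. a \<in> A \<Longrightarrow> c \<in> C \<Longrightarrow> a \<otimes> c \<otimes> inv a \<in> C"
    and upper: "acc_interval G C A" and lower: "acc_interval G B C"
  shows "acc_interval G B A"
proof (rule acc_intervalI)
  fix S assume S: "\<And>n. subgroup (S n) G" and BS: "\<And>n. B \<subseteq> S n" and SA: "\<And>n. S n \<subseteq> A"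
    and up: "\<And>n. S n \<subseteq> S (Suc n)"
  have mono: "S i \<subseteq> S j" if "i \<le> j" for i j using lift_Suc_mono_le[of S, OF up that] .
  have "\<exists>m. \<forall>n\<ge>m. S n <#> C = S m <#> C"
  proof (rule acc_intervalD[OF upper])
    show "subgroup (S n <#> C) G" for n
      using mult_normalized_subgroup[OF S C] normalized SA by blast
    show "C \<subseteq> S n <#> C" for n using subgroup_subset_mult(2)[OF S C] .
    show "S n <#> C \<subseteq> A" for n
      using SA CA subgroup.m_closed[OF A] unfolding set_mult_def by blast
    show "S n <#> C \<subseteq> S (Suc n) <#> C" for n
      using up unfolding set_mult_def by blast
  qed
  then obtain m1 where m1: "\<forall>n\<ge>m1. S n <#> C = S m1 <#> C" by blast
  have "\<exists>m. \<forall>n\<ge>m. S n \<inter> C = S m \<inter> C"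
    by (rule acc_intervalD[OF lower]) (use S C BS BC up in \<open>blast intro: subgroups_Inter_pair\<close>)+
  then obtain m2 where m2: "\<forall>n\<ge>m2. S n \<inter> C = S m2 \<inter> C" by blast
  have "S n = S (max m1 m2)" if "max m1 m2 \<le> n" for n
  proof (rule subgroup_eq_by_mult_and_inter[OF S S C mono[OF that]])
    show "S n <#> C \<subseteq> S (max m1 m2) <#> C" using m1 that by (metis max.bounded_iff order_refl)
    show "S n \<inter> C \<subseteq> S (max m1 m2) \<inter> C" using m2 that by (metis max.bounded_iff order_refl)
  qed
  thus "\<exists>m. \<forall>n\<ge>m. S n = S m" by blast
qed

text \<open>Between \<open>A'\<close> and \<open>A \<subseteq> \<langle>t\<rangle> A'\<close> subgroups correspond to subgroups of \<open>\<int>\<close>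
  (the admissible exponents of \<open>t\<close>), so ascending chains stabilise.\<close>

lemma acc_interval_cyclic:
  assumes A': "subgroup A' G" and t: "t \<in> carrier G"
    and rep: "A \<subseteq> generate G {t} <#> A'"
  shows "acc_interval G A' A"
proof (rule acc_intervalI)
  fix S assume S: "\<And>n. subgroup (S n) G" and A'S: "\<And>n. A' \<subseteq> S n" and SA: "\<And>n. S n \<subseteq> A"
    and up: "\<And>n. S n \<subseteq> S (Suc n)"
  have mono: "S i \<subseteq> S j" if "i \<le> j" for i j using lift_Suc_mono_le[of S, OF up that] .
  define I where "I n = {z::int. t [^] z \<in> S n}" for n
  have "\<exists>m. \<forall>n\<ge>m. I n = I m"
  proof (rule int_subgroup_chain_stable)
    show "0 \<in> I n" for n using subgroup.one_closed[OF S] t by (simp add: I_def)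
    show "a - b \<in> I n" if "a \<in> I n" "b \<in> I n" for n a b
      using that t int_pow_diff[of t a b] subgroup.m_closed[OF S] subgroup.m_inv_closed[OF S]
      by (simp add: I_def)
    show "I n \<subseteq> I (Suc n)" for n using up by (auto simp: I_def)
  qed
  then obtain m where m: "\<forall>n\<ge>m. I n = I m" by blast
  have "S n \<subseteq> S m" if nm: "m \<le> n" for n
  proof
    fix x assume x: "x \<in> S n"
    then obtain z a where za: "a \<in> A'" "x = t [^] (z::int) \<otimes> a"
      using SA rep unfolding generate_pow[OF t] set_mult_def by blast
    have ac: "a \<in> carrier G" using subgroup.mem_carrier[OF A' za(1)] .
    have "t [^] z = x \<otimes> inv a" using za ac t by (simp add: m_assoc)
    hence "t [^] z \<in> S n" using x A'S za(1) subgroup.m_closed[OF S] subgroup.m_inv_closed[OF S]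
      by (metis subsetD)
    hence "t [^] z \<in> S m" using m nm by (auto simp: I_def)
    thus "x \<in> S m" using za A'S subgroup.m_closed[OF S] by blast
  qed
  thus "\<exists>m. \<forall>n\<ge>m. S n = S m" using mono by blast
qed

lemma generate_subgroup_eq: "subgroup H G \<Longrightarrow> generate G H = H"
  using generate_subgroup_incl[of H H] generate.incl[of _ H G] by blast

text \<open>If all commutators of elements of \<open>D\<close> lie in the normal subgroup \<open>B \<subseteq> D\<close>, then for
  finite \<open>T \<subseteq> D\<close> the subgroup \<open>\<langle>T \<union> B\<rangle>\<close> arises from \<open>B\<close> by finitely many cyclic
  extensions, each normalised by \<open>D\<close>; hence ascending chains between them stabilise.\<close>

lemma acc_interval_abelian_section:
  assumes D: "subgroup D G" and B: "B \<lhd> G" and BD: "B \<subseteq> D"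
    and comm: "\<And>x y. x \<in> D \<Longrightarrow> y \<in> D \<Longrightarrow> x \<otimes> y \<otimes> inv x \<otimes> inv y \<in> B"
    and "finite T" and "T \<subseteq> D"
  shows "acc_interval G B (generate G (T \<union> B))"
  using \<open>finite T\<close> \<open>T \<subseteq> D\<close>
proof (induction T rule: finite_induct)
  case empty
  thus ?case using generate_subgroup_eq[OF normal_imp_subgroup[OF B]] acc_interval_refl by simp
next
  case (insert t T)
  define A' where "A' = generate G (T \<union> B)"
  define A where "A = generate G (insert t (T \<union> B))"
  have Dc: "D \<subseteq> carrier G" using D subgroup.subset by blast
  have t: "t \<in> D" "t \<in> carrier G" using insert Dc by auto
  have A': "subgroup A' G" unfolding A'_def using insert Dc BD by (intro generate_is_subgroup) blast
  have A: "subgroup A G" unfolding A_def using insert Dc BD by (intro generate_is_subgroup) blast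
  have A'D: "A' \<subseteq> D" unfolding A'_def using insert BD by (intro generate_subgroup_incl[OF _ D]) auto
  have AD: "A \<subseteq> D" unfolding A_def using insert BD by (intro generate_subgroup_incl[OF _ D]) auto
  have BA': "B \<subseteq> A'" unfolding A'_def using generate.incl[of _ "T \<union> B" G] by blast
  have A'A: "A' \<subseteq> A" unfolding A'_def A_def by (intro mono_generate) blast
  have normalized: "d \<otimes> c \<otimes> inv d \<in> A'" if d: "d \<in> D" and c: "c \<in> A'" for d c
  proof -
    have car: "d \<in> carrier G" "c \<in> carrier G" using d c A'D Dc by auto
    have "d \<otimes> c \<otimes> inv d = (d \<otimes> c \<otimes> inv d \<otimes> inv c) \<otimes> c" using car by (simp add: m_assoc)
    moreover have "d \<otimes> c \<otimes> inv d \<otimes> inv c \<in> A'" using comm[OF d] c A'D BA' by blast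
    ultimately show ?thesis using c subgroup.m_closed[OF A'] by metis
  qed
  have "A \<subseteq> generate G {t} <#> A'"
  proof (unfold A_def, rule generate_insert_subset_mult[OF A' t(2)])
    show "T \<union> B \<subseteq> A'" unfolding A'_def using generate.incl[of _ "T \<union> B" G] by blast
    have "generate G {t} \<subseteq> D" using t D by (intro generate_subgroup_incl) auto
    thus "d \<otimes> c \<otimes> inv d \<in> A'" if "d \<in> generate G {t}" "c \<in> A'" for d c
      using normalized that by blast
  qed
  hence "acc_interval G A' A" by (rule acc_interval_cyclic[OF A' t(2)])
  moreover have "acc_interval G B A'" using insert unfolding A'_def by blast
  ultimately have "acc_interval G B A"
    using acc_interval_extension[OF A A' BA' A'A] normalized AD by blast
  thus ?case unfolding A_def by simp
qed

definition commutator :: "'a \<Rightarrow> 'a \<Rightarrow> 'a" where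
  "commutator x y = x \<otimes> y \<otimes> inv x \<otimes> inv y"

lemma commutator_closed [simp]:
  "x \<in> carrier G \<Longrightarrow> y \<in> carrier G \<Longrightarrow> commutator x y \<in> carrier G"
  by (simp add: commutator_def)

lemma commutator_one [simp]:
  "y \<in> carrier G \<Longrightarrow> commutator \<one> y = \<one>" "x \<in> carrier G \<Longrightarrow> commutator x \<one> = \<one>"
  by (simp_all add: commutator_def)

lemma commutator_conj:
  "q \<in> carrier G \<Longrightarrow> x \<in> carrier G \<Longrightarrow> y \<in> carrier G \<Longrightarrow>
   q \<otimes> commutator x y \<otimes> inv q = commutator (q \<otimes> x \<otimes> inv q) (q \<otimes> y \<otimes> inv q)"
  by (simp add: commutator_def m_assoc inv_mult_group)

lemma commutator_mult_right:
  "x \<in> carrier G \<Longrightarrow> y \<in> carrier G \<Longrightarrow> z \<in> carrier G \<Longrightarrow>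
   commutator x (y \<otimes> z) = commutator x y \<otimes> (y \<otimes> commutator x z \<otimes> inv y)"
  by (simp add: commutator_def m_assoc inv_mult_group)

lemma commutator_inv_right:
  "x \<in> carrier G \<Longrightarrow> y \<in> carrier G \<Longrightarrow>
   commutator x (inv y) = inv y \<otimes> inv (commutator x y) \<otimes> y"
  by (simp add: commutator_def m_assoc inv_mult_group)

lemma commutator_mult_left:
  "x \<in> carrier G \<Longrightarrow> y \<in> carrier G \<Longrightarrow> z \<in> carrier G \<Longrightarrow>
   commutator (x \<otimes> y) z = (x \<otimes> commutator y z \<otimes> inv x) \<otimes> commutator x z"
  by (simp add: commutator_def m_assoc inv_mult_group)

lemma commutator_inv_left:
  "x \<in> carrier G \<Longrightarrow> y \<in> carrier G \<Longrightarrow>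
   commutator (inv x) y = inv x \<otimes> inv (commutator x y) \<otimes> x"
  by (simp add: commutator_def m_assoc inv_mult_group)

lemma conj_eq_commutator_mult:
  "q \<in> carrier G \<Longrightarrow> c \<in> carrier G \<Longrightarrow> q \<otimes> c \<otimes> inv q = commutator q c \<otimes> c"
  by (simp add: commutator_def m_assoc)

lemma commutator_right_subgroup:
  assumes M: "M \<lhd> G" and x: "x \<in> carrier G"
  shows "subgroup {y \<in> carrier G. commutator x y \<in> M} G"
proof (rule subgroupI)
  have M_conj: "q \<otimes> m \<otimes> inv q \<in> M" if "q \<in> carrier G" "m \<in> M" for q m
    using M that normal_inv_iff by blast
  have Msg: "subgroup M G" using M normal_imp_subgroup by blast
  show "{y \<in> carrier G. commutator x y \<in> M} \<noteq> {}"
    using x subgroup.one_closed[OF Msg] by (intro ex_in_conv[THEN iffD1]) auto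
  show "inv y \<in> {y \<in> carrier G. commutator x y \<in> M}" if "y \<in> {y \<in> carrier G. commutator x y \<in> M}" for y
    using that commutator_inv_right[OF x] M_conj[of "inv y" "inv (commutator x y)"] subgroup.m_inv_closed[OF Msg] by auto
  show "y \<otimes> z \<in> {y \<in> carrier G. commutator x y \<in> M}"
    if "y \<in> {y \<in> carrier G. commutator x y \<in> M}" "z \<in> {y \<in> carrier G. commutator x y \<in> M}" for y z
    using that commutator_mult_right[OF x] M_conj subgroup.m_closed[OF Msg] by auto
qed auto

lemma commutator_left_subgroup:
  assumes M: "M \<lhd> G" and y: "y \<in> carrier G"
  shows "subgroup {x \<in> carrier G. commutator x y \<in> M} G"
proof (rule subgroupI)
  have M_conj: "q \<otimes> m \<otimes> inv q \<in> M" if "q \<in> carrier G" "m \<in> M" for q m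
    using M that normal_inv_iff by blast
  have Msg: "subgroup M G" using M normal_imp_subgroup by blast
  show "{x \<in> carrier G. commutator x y \<in> M} \<noteq> {}"
    using y subgroup.one_closed[OF Msg] by (intro ex_in_conv[THEN iffD1]) auto
  show "inv x \<in> {x \<in> carrier G. commutator x y \<in> M}" if "x \<in> {x \<in> carrier G. commutator x y \<in> M}" for x
    using that commutator_inv_left[OF _ y] M_conj[of "inv x" "inv (commutator x y)"] subgroup.m_inv_closed[OF Msg] by auto
  show "x \<otimes> z \<in> {x \<in> carrier G. commutator x y \<in> M}"
    if "x \<in> {x \<in> carrier G. commutator x y \<in> M}" "z \<in> {x \<in> carrier G. commutator x y \<in> M}" for x z
    using that commutator_mult_left[OF _ _ y] M_conj subgroup.m_closed[OF Msg] by auto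
qed auto

lemma comm_subgroup_commutator:
  "comm_subgroup G H = generate G {commutator x y | x y. x \<in> carrier G \<and> y \<in> H}"
  by (simp add: comm_subgroup_def commutator_def)

lemma commutator_in_comm_subgroup: "x \<in> carrier G \<Longrightarrow> y \<in> H \<Longrightarrow> commutator x y \<in> comm_subgroup G H"
  unfolding comm_subgroup_commutator by (rule generate.incl) blast

lemma normal_generate_if_conj_generators:
  assumes H: "H \<subseteq> carrier G"
    and conj: "\<And>h g. h \<in> H \<Longrightarrow> g \<in> carrier G \<Longrightarrow> g \<otimes> h \<otimes> inv g \<in> generate G H"
  shows "generate G H \<lhd> G"
proof (rule normal_invI[OF generate_is_subgroup[OF H]])
  fix g h assume g: "g \<in> carrier G" and h: "h \<in> generate G H"
  let ?X = "{x \<in> carrier G. g \<otimes> x \<otimes> inv g \<in> generate G H}"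
  have "subgroup ?X G"
  proof (rule subgroupI)
    show "?X \<noteq> {}" using g generate.one[of G H] by (intro ex_in_conv[THEN iffD1]) auto
    show "inv x \<in> ?X" if "x \<in> ?X" for x
    proof -
      have "g \<otimes> inv x \<otimes> inv g = inv (g \<otimes> x \<otimes> inv g)" using that g by (simp add: inv_mult_group m_assoc)
      thus ?thesis using that generate_m_inv_closed[OF H] by auto
    qed
    show "x \<otimes> y \<in> ?X" if "x \<in> ?X" "y \<in> ?X" for x y
    proof -
      have "g \<otimes> (x \<otimes> y) \<otimes> inv g = (g \<otimes> x \<otimes> inv g) \<otimes> (g \<otimes> y \<otimes> inv g)"
        using that g by (simp add: m_assoc)
      thus ?thesis using that generate.eng[of _ G H] by auto
    qed
  qed auto
  moreover have "H \<subseteq> ?X" using H conj g by blast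
  ultimately show "g \<otimes> h \<otimes> inv g \<in> generate G H" using generate_subgroup_incl h by blast
qed

lemma comm_subgroup_normal:
  assumes H: "H \<lhd> G" shows "comm_subgroup G H \<lhd> G"
proof -
  have Hc: "H \<subseteq> carrier G" using H normal_imp_subgroup subgroup.subset by blast
  show ?thesis unfolding comm_subgroup_commutator
  proof (rule normal_generateI)
    fix h g assume "h \<in> {commutator x y | x y. x \<in> carrier G \<and> y \<in> H}" and g: "g \<in> carrier G"
    then obtain x y where xy: "h = commutator x y" "x \<in> carrier G" "y \<in> H" by blast
    have "g \<otimes> y \<otimes> inv g \<in> H" using H g xy normal_inv_iff by blast
    moreover have "g \<otimes> h \<otimes> inv g = commutator (g \<otimes> x \<otimes> inv g) (g \<otimes> y \<otimes> inv g)"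
      using xy g Hc commutator_conj by blast
    ultimately show "g \<otimes> h \<otimes> inv g \<in> {commutator x y | x y. x \<in> carrier G \<and> y \<in> H}"
      using g xy by blast
  qed (use Hc in auto)
qed

lemma comm_subgroup_le:
  assumes H: "H \<lhd> G" shows "comm_subgroup G H \<subseteq> H"
  unfolding comm_subgroup_commutator
proof (rule generate_subgroup_incl)
  have Hsg: "subgroup H G" using H normal_imp_subgroup by blast
  show "{commutator x y | x y. x \<in> carrier G \<and> y \<in> H} \<subseteq> H"
  proof clarify
    fix x y assume xy: "x \<in> carrier G" "y \<in> H"
    have "commutator x y = (x \<otimes> y \<otimes> inv x) \<otimes> inv y" by (simp add: commutator_def)
    moreover have "x \<otimes> y \<otimes> inv x \<in> H" using H xy normal_inv_iff by blast
    ultimately show "commutator x y \<in> H"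
      using xy subgroup.m_closed[OF Hsg] subgroup.m_inv_closed[OF Hsg] by metis
  qed
qed (use H normal_imp_subgroup in blast)

lemma lcs_normal: "lcs G (Suc k) \<lhd> G"
  by (induction k) (simp_all add: normal_self comm_subgroup_normal)

lemma lcs_subgroup: "subgroup (lcs G (Suc k)) G"
  using lcs_normal normal_imp_subgroup by blast

lemma lcs_carrier: "lcs G (Suc k) \<subseteq> carrier G"
  using lcs_subgroup subgroup.subset by blast

lemma lcs_Suc_le: "lcs G (Suc (Suc k)) \<subseteq> lcs G (Suc k)"
  using comm_subgroup_le[OF lcs_normal] by simp

lemma commutator_lcs: "x \<in> carrier G \<Longrightarrow> y \<in> lcs G (Suc k) \<Longrightarrow> commutator x y \<in> lcs G (Suc (Suc k))"
  using commutator_in_comm_subgroup by simp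

text \<open>Commutators are bilinear modulo a normal subgroup \<open>M\<close>: to get \<open>[G, \<langle>T \<union> L\<rangle>] \<subseteq> M\<close>
  it suffices that \<open>[s, t] \<in> M\<close> for generators \<open>s\<close> of \<open>G\<close> and \<open>t \<in> T\<close>, and \<open>[G, L] \<subseteq> M\<close>.\<close>

lemma comm_subgroup_generate_subset:
  assumes M: "M \<lhd> G" and S: "S \<subseteq> carrier G" "generate G S = carrier G"
    and TL: "T \<union> L \<subseteq> carrier G"
    and gens: "\<And>s t. s \<in> S \<Longrightarrow> t \<in> T \<Longrightarrow> commutator s t \<in> M"
    and rest: "\<And>x l. x \<in> carrier G \<Longrightarrow> l \<in> L \<Longrightarrow> commutator x l \<in> M"
  shows "comm_subgroup G (generate G (T \<union> L)) \<subseteq> M"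
proof -
  have comm_S: "commutator s y \<in> M" if s: "s \<in> S" and y: "y \<in> generate G (T \<union> L)" for s y
  proof -
    have "s \<in> carrier G" using s S by blast
    moreover have "T \<union> L \<subseteq> {y \<in> carrier G. commutator s y \<in> M}"
      using gens[OF s] rest \<open>s \<in> carrier G\<close> TL by blast
    ultimately have "generate G (T \<union> L) \<subseteq> {y \<in> carrier G. commutator s y \<in> M}"
      by (intro generate_subgroup_incl[OF _ commutator_right_subgroup[OF M]])
    thus ?thesis using y by blast
  qed
  have "commutator x y \<in> M" if x: "x \<in> carrier G" and y: "y \<in> generate G (T \<union> L)" for x y
  proof -
    have "y \<in> carrier G" using y generate_incl[OF TL] by blast
    moreover have "S \<subseteq> {x \<in> carrier G. commutator x y \<in> M}" using comm_S y S by blast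
    ultimately have "generate G S \<subseteq> {x \<in> carrier G. commutator x y \<in> M}"
      by (intro generate_subgroup_incl[OF _ commutator_left_subgroup[OF M]])
    hence "carrier G \<subseteq> {x \<in> carrier G. commutator x y \<in> M}" unfolding S(2) .
    thus ?thesis using x by blast
  qed
  thus ?thesis unfolding comm_subgroup_commutator
    by (intro generate_subgroup_incl[OF _ normal_imp_subgroup[OF M]]) blast
qed

text \<open>Adding elements of \<open>\<gamma>\<^sub>k\<^sub>+\<^sub>1\<close> to \<open>\<gamma>\<^sub>k\<^sub>+\<^sub>2\<close> generates a normal subgroup, since conjugation
  changes them only by factors in \<open>\<gamma>\<^sub>k\<^sub>+\<^sub>2\<close>.\<close>

lemma normal_generate_mod_lcs:
  assumes C: "C \<subseteq> lcs G (Suc k)"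
  shows "generate G (C \<union> lcs G (Suc (Suc k))) \<lhd> G"
proof (rule normal_generate_if_conj_generators)
  show gens: "C \<union> lcs G (Suc (Suc k)) \<subseteq> carrier G" using C lcs_carrier by blast
  fix h q assume h: "h \<in> C \<union> lcs G (Suc (Suc k))" and q: "q \<in> carrier G"
  show "q \<otimes> h \<otimes> inv q \<in> generate G (C \<union> lcs G (Suc (Suc k)))"
  proof (cases "h \<in> C")
    case True
    hence "commutator q h \<in> generate G (C \<union> lcs G (Suc (Suc k)))"
      "h \<in> generate G (C \<union> lcs G (Suc (Suc k)))"
      using commutator_lcs[OF q] C generate.incl[of _ "C \<union> lcs G (Suc (Suc k))" G] by blast+
    thus ?thesis using conj_eq_commutator_mult[OF q] gens h generate.eng by (metis subsetD)
  next
    case False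
    hence "q \<otimes> h \<otimes> inv q \<in> lcs G (Suc (Suc k))" using h q lcs_normal normal_inv_iff by blast
    thus ?thesis using generate.incl[of _ "C \<union> lcs G (Suc (Suc k))" G] by blast
  qed
qed

text \<open>In a finitely generated group each layer \<open>\<gamma>\<^sub>k/\<gamma>\<^sub>k\<^sub>+\<^sub>1\<close> of the lower central series is
  finitely generated: if \<open>S\<close> generates \<open>G\<close> and \<open>T\<close> generates \<open>\<gamma>\<^sub>k\<close> modulo \<open>\<gamma>\<^sub>k\<^sub>+\<^sub>1\<close>, then the
  commutators \<open>[s, t]\<close> generate \<open>\<gamma>\<^sub>k\<^sub>+\<^sub>1\<close> modulo \<open>\<gamma>\<^sub>k\<^sub>+\<^sub>2\<close>.\<close>

lemma lcs_layer_finitely_generated: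
  assumes S: "S \<subseteq> carrier G" "finite S" "generate G S = carrier G"
  shows "\<exists>T. finite T \<and> T \<subseteq> lcs G (Suc k) \<and> lcs G (Suc k) = generate G (T \<union> lcs G (Suc (Suc k)))"
proof (induction k)
  case 0
  have "generate G (S \<union> lcs G 2) = carrier G"
    using S lcs_carrier[of 1] mono_generate[of S "S \<union> lcs G 2"] generate_incl[of "S \<union> lcs G 2"]
    by (simp add: numeral_2_eq_2)
  thus ?case using S by (intro exI[of _ S]) (simp add: numeral_2_eq_2)
next
  case (Suc k)
  define \<gamma>1 \<gamma>2 \<gamma>3 where "\<gamma>1 = lcs G (Suc k)" and "\<gamma>2 = lcs G (Suc (Suc k))"
    and "\<gamma>3 = lcs G (Suc (Suc (Suc k)))"
  obtain T where T: "finite T" "T \<subseteq> \<gamma>1" "\<gamma>1 = generate G (T \<union> \<gamma>2)"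
    using Suc \<gamma>1_def \<gamma>2_def by blast
  define C where "C = (\<lambda>(s, t). commutator s t) ` (S \<times> T)"
  have C\<gamma>2: "C \<subseteq> \<gamma>2"
  proof (clarsimp simp: C_def)
    fix s t assume "s \<in> S" "t \<in> T"
    thus "commutator s t \<in> \<gamma>2" using S(1) T(2) commutator_lcs unfolding \<gamma>1_def \<gamma>2_def by blast
  qed
  define M where "M = generate G (C \<union> \<gamma>3)"
  have M: "M \<lhd> G" unfolding M_def \<gamma>3_def using normal_generate_mod_lcs[OF C\<gamma>2[unfolded \<gamma>2_def]] .
  have \<gamma>3M: "\<gamma>3 \<subseteq> M" and CM: "C \<subseteq> M" unfolding M_def using generate.incl[of _ "C \<union> \<gamma>3" G] by blast+
  have "\<gamma>2 = comm_subgroup G \<gamma>1" unfolding \<gamma>1_def \<gamma>2_def by simp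
  also have "\<dots> = comm_subgroup G (generate G (T \<union> \<gamma>2))" using T(3) by simp
  also have "\<dots> \<subseteq> M"
  proof (rule comm_subgroup_generate_subset[OF M S(1,3)])
    show "T \<union> \<gamma>2 \<subseteq> carrier G" using T(2) lcs_carrier unfolding \<gamma>1_def \<gamma>2_def by blast
    show "commutator s t \<in> M" if "s \<in> S" "t \<in> T" for s t using that CM unfolding C_def by blast
    show "commutator x l \<in> M" if "x \<in> carrier G" "l \<in> \<gamma>2" for x l
      using commutator_lcs[OF that(1)] that(2) \<gamma>3M unfolding \<gamma>2_def \<gamma>3_def by blast
  qed
  finally have "\<gamma>2 \<subseteq> M" .
  moreover have "M \<subseteq> \<gamma>2"
    unfolding M_def using C\<gamma>2 lcs_Suc_le[of "Suc k"] lcs_subgroup[of "Suc k"] unfolding \<gamma>2_def \<gamma>3_def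
    by (intro generate_subgroup_incl) auto
  ultimately have "\<gamma>2 = generate G (C \<union> \<gamma>3)" unfolding M_def by blast
  moreover have "finite C" using S(2) T(1) unfolding C_def by simp
  ultimately show ?case using C\<gamma>2 unfolding \<gamma>2_def \<gamma>3_def by blast
qed

lemma acc_interval_lcs:
  assumes S: "S \<subseteq> carrier G" "finite S" "generate G S = carrier G"
  shows "acc_interval G (lcs G (Suc k)) (carrier G)"
proof (induction k)
  case 0 thus ?case using acc_interval_refl by simp
next
  case (Suc k)
  obtain T where T: "finite T" "T \<subseteq> lcs G (Suc k)"
    "lcs G (Suc k) = generate G (T \<union> lcs G (Suc (Suc k)))"
    using lcs_layer_finitely_generated[OF S] by blast
  have "acc_interval G (lcs G (Suc (Suc k))) (lcs G (Suc k))"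
  proof (subst T(3), rule acc_interval_abelian_section[OF lcs_subgroup lcs_normal lcs_Suc_le _ T(1,2)])
    fix x y assume "x \<in> lcs G (Suc k)" "y \<in> lcs G (Suc k)"
    thus "x \<otimes> y \<otimes> inv x \<otimes> inv y \<in> lcs G (Suc (Suc k))"
      using commutator_lcs lcs_carrier unfolding commutator_def by blast
  qed
  thus ?case
    using acc_interval_extension[OF subgroup_self lcs_subgroup lcs_Suc_le lcs_carrier _ Suc]
      lcs_normal normal_inv_iff by blast
qed

end

text \<open>Groups with the ascending chain condition on subgroups are Hopfian: the kernels of the
  iterates of a surjective endomorphism form an ascending chain, and once it is stationary the
  endomorphism is injective.\<close>

lemma (in group) surjective_endomorphism_injective:
  assumes acc: "acc_interval G {\<one>} (carrier G)"
    and g: "g \<in> hom G G" and surj: "g ` carrier G = carrier G"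
  shows "inj_on g (carrier G)"
proof -
  have iter_hom: "group_hom G G (g ^^ n)" for n
  proof (induction n)
    case 0 thus ?case by (simp add: group_hom_def group_hom_axioms_def hom_def is_group)
  next
    case (Suc n)
    thus ?case using Group.hom_compose[OF group_hom.homh[OF Suc] g]
      by (simp add: group_hom_def group_hom_axioms_def is_group comp_def)
  qed
  have iter_surj: "(g ^^ n) ` carrier G = carrier G" for n
  proof (induction n)
    case (Suc n) thus ?case using surj by (metis funpow.simps(2) image_comp)
  qed simp
  define K where "K n = kernel G G (g ^^ n)" for n
  have K_subgroup: "subgroup (K n) G" for n unfolding K_def using group_hom.subgroup_kernel[OF iter_hom] .
  have "g \<one> = \<one>" using group_hom.hom_one[OF iter_hom[of 1]] by simp
  hence K_mono: "K n \<subseteq> K (Suc n)" for n by (auto simp: K_def kernel_def)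
  have "\<exists>m. \<forall>n\<ge>m. K n = K m"
  proof (rule acc_intervalD[of G "{\<one>}" "carrier G" K])
    show "{\<one>} \<subseteq> K n" "K n \<subseteq> carrier G" for n
      using subgroup.one_closed[OF K_subgroup] subgroup.subset[OF K_subgroup] by auto
  qed (use acc K_subgroup K_mono in auto)
  then obtain m where m: "\<forall>n\<ge>m. K n = K m" by blast
  have "x = \<one>" if x: "x \<in> carrier G" "g x = \<one>" for x
  proof -
    obtain y where y: "y \<in> carrier G" "x = (g ^^ m) y" using iter_surj[of m] x by (metis imageE)
    hence "y \<in> K (Suc m)" using x by (simp add: K_def kernel_def)
    hence "y \<in> K m" using m by (metis le_Suc_eq order_refl)
    thus ?thesis using y by (simp add: K_def kernel_def)
  qed
  thus ?thesis using group_hom.inj_on_one_iff[OF iter_hom[of 1]] by simp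
qed

lemma (in group) finitely_generated_nilpotent_hopfian:
  assumes fg: "finitely_generated G" and nilpotent: "lcs G (Suc k) = {\<one>}"
    and g: "g \<in> hom G G" and surj: "g ` carrier G = carrier G"
  shows "inj_on g (carrier G)"
proof -
  obtain S where "S \<subseteq> carrier G" "finite S" "generate G S = carrier G"
    using fg unfolding finitely_generated_def by blast
  hence "acc_interval G {\<one>} (carrier G)" using acc_interval_lcs[of S k] nilpotent by simp
  thus ?thesis using surjective_endomorphism_injective g surj by blast
qed

lemma (in group_hom) comm_subgroup_image:
  assumes surj: "h ` carrier G = carrier H" and A: "A \<subseteq> carrier G"
  shows "h ` comm_subgroup G A = comm_subgroup H (h ` A)"
proof -
  let ?C = "{x \<otimes> y \<otimes> inv x \<otimes> inv y | x y. x \<in> carrier G \<and> y \<in> A}"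
  let ?C' = "{x \<otimes>\<^bsub>H\<^esub> y \<otimes>\<^bsub>H\<^esub> inv\<^bsub>H\<^esub> x \<otimes>\<^bsub>H\<^esub> inv\<^bsub>H\<^esub> y | x y. x \<in> carrier H \<and> y \<in> h ` A}"
  have hom_comm: "h (x \<otimes> y \<otimes> inv x \<otimes> inv y) = h x \<otimes>\<^bsub>H\<^esub> h y \<otimes>\<^bsub>H\<^esub> inv\<^bsub>H\<^esub> h x \<otimes>\<^bsub>H\<^esub> inv\<^bsub>H\<^esub> h y"
    if "x \<in> carrier G" "y \<in> carrier G" for x y
    using that by simp
  have image_gens: "h ` ?C = ?C'"
  proof
    show "h ` ?C \<subseteq> ?C'" using hom_comm A by fastforce
    show "?C' \<subseteq> h ` ?C"
    proof clarify
      fix x' y assume x': "x' \<in> carrier H" and y: "y \<in> A"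
      then obtain x where x: "x \<in> carrier G" "x' = h x" using surj by blast
      have "y \<in> carrier G" using y A by blast
      hence "x' \<otimes>\<^bsub>H\<^esub> h y \<otimes>\<^bsub>H\<^esub> inv\<^bsub>H\<^esub> x' \<otimes>\<^bsub>H\<^esub> inv\<^bsub>H\<^esub> h y = h (x \<otimes> y \<otimes> inv x \<otimes> inv y)"
        using hom_comm x by simp
      moreover have "x \<otimes> y \<otimes> inv x \<otimes> inv y \<in> ?C" using x y by blast
      ultimately show "x' \<otimes>\<^bsub>H\<^esub> h y \<otimes>\<^bsub>H\<^esub> inv\<^bsub>H\<^esub> x' \<otimes>\<^bsub>H\<^esub> inv\<^bsub>H\<^esub> h y \<in> h ` ?C"
        by (rule image_eqI)
    qed
  qed
  have "?C \<subseteq> carrier G" using A by auto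
  hence "generate H (h ` ?C) = h ` generate G ?C" by (rule generate_img)
  thus ?thesis unfolding comm_subgroup_def image_gens by (rule sym)
qed

lemma (in group_hom) lcs_image:
  assumes surj: "h ` carrier G = carrier H"
  shows "h ` lcs G (Suc k) = lcs H (Suc k)"
proof (induction k)
  case 0 thus ?case using surj by simp
next
  case (Suc k)
  thus ?case using comm_subgroup_image[OF surj G.lcs_carrier] by simp
qed

lemma (in group_hom) finitely_generated_image:
  assumes fg: "finitely_generated G" and surj: "h ` carrier G = carrier H"
  shows "finitely_generated H"
proof -
  obtain S where S: "S \<subseteq> carrier G" "finite S" "generate G S = carrier G"
    using fg unfolding finitely_generated_def by blast
  have "generate H (h ` S) = h ` generate G S" by (rule generate_img[OF S(1)])
  hence "generate H (h ` S) = carrier H" unfolding S(3) surj .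
  moreover have "h ` S \<subseteq> carrier H" "finite (h ` S)" using S(1,2) by auto
  ultimately show ?thesis unfolding finitely_generated_def by blast
qed

lemma (in normal) quotient_projection:
  shows "(\<lambda>a. H #> a) \<in> hom G (G Mod H)"
    and "(\<lambda>a. H #> a) ` carrier G = carrier (G Mod H)"
    and "x \<in> carrier G \<Longrightarrow> H #> x = \<one>\<^bsub>G Mod H\<^esub> \<longleftrightarrow> x \<in> H"
  using r_coset_hom_Mod coset_join1[OF _ _ is_subgroup] coset_join2[OF _ is_subgroup]
  by (auto simp: carrier_FactGroup)

lemma factor_through_surjection:
  assumes F: "group F" and H: "group H" and H': "group H'"
    and a: "\<alpha> \<in> hom F H" and surj: "\<alpha> ` carrier F = carrier H" and b: "\<beta> \<in> hom F H'"
    and ker: "\<And>x. x \<in> carrier F \<Longrightarrow> \<alpha> x = \<one>\<^bsub>H\<^esub> \<Longrightarrow> \<beta> x = \<one>\<^bsub>H'\<^esub>"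
  shows "\<exists>f \<in> hom H H'. \<forall>x\<in>carrier F. f (\<alpha> x) = \<beta> x"
proof -
  interpret \<alpha>: group_hom F H \<alpha> using F H a by (simp add: group_hom_def group_hom_axioms_def)
  interpret \<beta>: group_hom F H' \<beta> using F H' b by (simp add: group_hom_def group_hom_axioms_def)
  define f where "f y = \<beta> (SOME x. x \<in> carrier F \<and> \<alpha> x = y)" for y
  have f_\<alpha>: "f (\<alpha> x) = \<beta> x" if x: "x \<in> carrier F" for x
  proof -
    define x' where "x' = (SOME y. y \<in> carrier F \<and> \<alpha> y = \<alpha> x)"
    have x': "x' \<in> carrier F" "\<alpha> x' = \<alpha> x" unfolding x'_def by (rule someI2[of _ x]; use x in auto)+
    hence "\<alpha> (x' \<otimes>\<^bsub>F\<^esub> inv\<^bsub>F\<^esub> x) = \<one>\<^bsub>H\<^esub>" using x by simp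
    hence "\<beta> (x' \<otimes>\<^bsub>F\<^esub> inv\<^bsub>F\<^esub> x) = \<one>\<^bsub>H'\<^esub>" using ker x x' by simp
    hence "\<beta> x' = \<beta> x" using x x' \<beta>.H.inv_solve_right'[of "\<one>\<^bsub>H'\<^esub>" "\<beta> x'" "\<beta> x"] by simp
    thus ?thesis unfolding f_def x'_def[symmetric] .
  qed
  have "f \<in> hom H H'"
  proof (rule homI)
    fix y assume "y \<in> carrier H"
    then obtain x where "x \<in> carrier F" "y = \<alpha> x" using surj by auto
    thus "f y \<in> carrier H'" using f_\<alpha> by simp
  next
    fix y z assume "y \<in> carrier H" "z \<in> carrier H"
    then obtain x x' where x: "x \<in> carrier F" "y = \<alpha> x" "x' \<in> carrier F" "z = \<alpha> x'" using surj by blast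
    hence "f (y \<otimes>\<^bsub>H\<^esub> z) = \<beta> (x \<otimes>\<^bsub>F\<^esub> x')" using f_\<alpha> by (simp flip: \<alpha>.hom_mult)
    thus "f (y \<otimes>\<^bsub>H\<^esub> z) = f y \<otimes>\<^bsub>H'\<^esub> f z" using x f_\<alpha> by simp
  qed
  thus ?thesis using f_\<alpha> by blast
qed

lemma quotient_map_from_iso:
  assumes N: "N \<lhd> F" and G: "group G" and iso: "F Mod N \<cong> G"
  shows "\<exists>p \<in> hom F G. p ` carrier F = carrier G \<and> (\<forall>x\<in>carrier F. p x = \<one>\<^bsub>G\<^esub> \<longleftrightarrow> x \<in> N)"
proof -
  interpret N: normal N F by fact
  obtain \<iota> where \<iota>: "\<iota> \<in> iso (F Mod N) G" using iso unfolding is_iso_def by blast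
  interpret \<iota>: group_hom "F Mod N" G \<iota>
    using N.factorgroup_is_group G \<iota> by (simp add: group_hom_def group_hom_axioms_def iso_iff)
  let ?p = "\<iota> \<circ> (\<lambda>a. N #>\<^bsub>F\<^esub> a)"
  have "?p \<in> hom F G" using Group.hom_compose[OF N.quotient_projection(1) \<iota>.homh] .
  moreover have "?p ` carrier F = carrier G"
    using N.quotient_projection(2) \<iota> unfolding iso_iff by (metis image_comp)
  moreover have "?p x = \<one>\<^bsub>G\<^esub> \<longleftrightarrow> x \<in> N" if x: "x \<in> carrier F" for x
  proof -
    have "N #>\<^bsub>F\<^esub> x \<in> carrier (F Mod N)" using N.quotient_projection(2) x by blast
    hence "?p x = \<one>\<^bsub>G\<^esub> \<longleftrightarrow> N #>\<^bsub>F\<^esub> x = \<one>\<^bsub>F Mod N\<^esub>"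
      using \<iota>.inj_on_one_iff \<iota> \<iota>.hom_one by (auto simp: iso_iff)
    thus ?thesis using N.quotient_projection(3)[OF x] by simp
  qed
  ultimately show ?thesis by blast
qed

lemma (in group) lcs_quotient_by_lcs:
  "lcs (G Mod lcs G (Suc k)) (Suc k) = {\<one>\<^bsub>G Mod lcs G (Suc k)\<^esub>}"
proof -
  interpret N: normal "lcs G (Suc k)" G by (rule lcs_normal)
  interpret \<pi>: group_hom G "G Mod lcs G (Suc k)" "\<lambda>a. lcs G (Suc k) #> a"
    using N.factorgroup_is_group N.quotient_projection(1) by (simp add: group_hom_def group_hom_axioms_def is_group)
  have "lcs (G Mod lcs G (Suc k)) (Suc k) = (\<lambda>a. lcs G (Suc k) #> a) ` lcs G (Suc k)"
    using \<pi>.lcs_image[OF N.quotient_projection(2)] by simp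
  also have "\<dots> = {\<one>\<^bsub>G Mod lcs G (Suc k)\<^esub>}"
    using N.quotient_projection(3) lcs_carrier subgroup.one_closed[OF lcs_subgroup] by blast
  finally show ?thesis .
qed

lemma induced_quotient_surjection:
  assumes N: "N \<lhd> G" and N': "N' \<lhd> G'" and f: "group_hom G G' f"
    and surj: "f ` carrier G = carrier G'" and fN: "f ` N \<subseteq> N'"
  shows "\<exists>f' \<in> hom (G Mod N) (G' Mod N'). f' ` carrier (G Mod N) = carrier (G' Mod N') \<and>
           (\<forall>x\<in>carrier G. f' (N #>\<^bsub>G\<^esub> x) = N' #>\<^bsub>G'\<^esub> f x)"
proof -
  interpret N: normal N G by fact
  interpret N': normal N' G' by fact
  interpret f: group_hom G G' f by fact
  have "(\<lambda>a. N' #>\<^bsub>G'\<^esub> a) \<circ> f \<in> hom G (G' Mod N')"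
    using Group.hom_compose[OF f.homh N'.quotient_projection(1)] .
  moreover have "N' #>\<^bsub>G'\<^esub> f x = \<one>\<^bsub>G' Mod N'\<^esub>" if "x \<in> carrier G" "N #>\<^bsub>G\<^esub> x = \<one>\<^bsub>G Mod N\<^esub>" for x
    using that fN N.quotient_projection(3) N'.quotient_projection(3) by auto
  ultimately obtain f' where f': "f' \<in> hom (G Mod N) (G' Mod N')" "\<forall>x\<in>carrier G. f' (N #>\<^bsub>G\<^esub> x) = N' #>\<^bsub>G'\<^esub> f x"
    using factor_through_surjection[OF N.is_group N.factorgroup_is_group N'.factorgroup_is_group
        N.quotient_projection(1,2)] by (metis comp_apply)
  have "f' ` carrier (G Mod N) = (\<lambda>a. N' #>\<^bsub>G'\<^esub> a) ` f ` carrier G"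
    using f'(2) N.quotient_projection(2)[symmetric] by (auto simp: image_iff)
  also have "\<dots> = carrier (G' Mod N')" using surj N'.quotient_projection(2) by simp
  finally show ?thesis using f' by blast
qed

text \<open>The induced surjection of the
  quotients, followed by the inverse isomorphism, is a surjective endomorphism of a finitely
  generated nilpotent group, hence injective.\<close>

lemma surjection_kernel_in_lcs:
  assumes H: "group H" and H': "group H'" and fg: "finitely_generated H"
    and f: "f \<in> hom H H'" and surj: "f ` carrier H = carrier H'"
    and iso: "H Mod lcs H (Suc k) \<cong> H' Mod lcs H' (Suc k)"
    and h: "h \<in> carrier H" and fh: "f h = \<one>\<^bsub>H'\<^esub>"
  shows "h \<in> lcs H (Suc k)"
proof -
  interpret f: group_hom H H' f using H H' f by (simp add: group_hom_def group_hom_axioms_def)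
  define N N' where "N = lcs H (Suc k)" and "N' = lcs H' (Suc k)"
  have N: "N \<lhd> H" and N': "N' \<lhd> H'" unfolding N_def N'_def by (rule f.G.lcs_normal f.H.lcs_normal)+
  interpret N: normal N H by fact
  interpret N': normal N' H' by fact
  have "f ` N \<subseteq> N'" unfolding N_def N'_def using f.lcs_image[OF surj] by simp
  then obtain f' where f': "f' \<in> hom (H Mod N) (H' Mod N')"
      "f' ` carrier (H Mod N) = carrier (H' Mod N')" "\<forall>x\<in>carrier H. f' (N #>\<^bsub>H\<^esub> x) = N' #>\<^bsub>H'\<^esub> f x"
    using induced_quotient_surjection[OF N N' f.group_hom_axioms surj] by blast
  obtain \<iota> where \<iota>: "\<iota> \<in> iso (H' Mod N') (H Mod N)"
    using group.iso_sym[OF N.factorgroup_is_group iso[folded N_def N'_def]] unfolding is_iso_def by blast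
  have "\<iota> \<circ> f' \<in> hom (H Mod N) (H Mod N)"
    using Group.hom_compose[OF f'(1)] \<iota> unfolding iso_iff by blast
  then interpret g: group_hom "H Mod N" "H Mod N" "\<iota> \<circ> f'"
    using N.factorgroup_is_group by (simp add: group_hom_def group_hom_axioms_def)
  have g_surj: "(\<iota> \<circ> f') ` carrier (H Mod N) = carrier (H Mod N)"
    using f'(2) \<iota> unfolding iso_iff by (metis image_comp)
  have quotient_fg: "finitely_generated (H Mod N)"
  proof -
    have "group_hom H (H Mod N) (\<lambda>a. N #>\<^bsub>H\<^esub> a)"
      using H N.factorgroup_is_group N.quotient_projection(1) by (simp add: group_hom_def group_hom_axioms_def)
    thus ?thesis using group_hom.finitely_generated_image[OF _ fg N.quotient_projection(2)] by blast
  qed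
  have inj: "inj_on (\<iota> \<circ> f') (carrier (H Mod N))"
    using g.G.finitely_generated_nilpotent_hopfian[OF quotient_fg _ g.homh g_surj]
      f.G.lcs_quotient_by_lcs[of k, folded N_def] by blast
  have "(\<iota> \<circ> f') (N #>\<^bsub>H\<^esub> h) = \<iota> \<one>\<^bsub>H' Mod N'\<^esub>"
    using f'(3) h fh N'.quotient_projection(3) N'.subgroup_axioms subgroup.one_closed by fastforce
  also have "\<dots> = \<one>\<^bsub>H Mod N\<^esub>"
  proof -
    have "group_hom (H' Mod N') (H Mod N) \<iota>"
      using \<iota> N'.factorgroup_is_group N.factorgroup_is_group
      by (simp add: group_hom_def group_hom_axioms_def iso_iff)
    thus ?thesis by (rule group_hom.hom_one)
  qed
  finally have "N #>\<^bsub>H\<^esub> h = \<one>\<^bsub>H Mod N\<^esub>"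
    using inj g.inj_on_one_iff N.quotient_projection(2) h by blast
  thus ?thesis using N.quotient_projection(3)[OF h] N_def by simp
qed

lemma residually_nilpotentD:
  assumes "residually_nilpotent G" and "\<And>k. h \<in> lcs G (Suc k)"
  shows "h = \<one>\<^bsub>G\<^esub>"
proof -
  have "h \<in> lcs G k" if "k \<in> {1..}" for k using assms(2)[of "k - 1"] that by simp
  thus ?thesis using assms(1) unfolding residually_nilpotent_def by blast
qed

lemma surjection_iso_if_residually_nilpotent:
  assumes H: "group H" and H': "group H'" and fg: "finitely_generated H"
    and rn: "residually_nilpotent H" and f: "f \<in> hom H H'" and surj: "f ` carrier H = carrier H'"
    and iso: "\<And>k. H Mod lcs H (Suc k) \<cong> H' Mod lcs H' (Suc k)"
  shows "H \<cong> H'"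
proof -
  have "h = \<one>\<^bsub>H\<^esub>" if "h \<in> carrier H" "f h = \<one>\<^bsub>H'\<^esub>" for h
    using residually_nilpotentD[OF rn] surjection_kernel_in_lcs[OF H H' fg f surj iso that] .
  hence "kernel H H' f = {\<one>\<^bsub>H\<^esub>}"
    using H H' f monoid.one_closed[OF group.is_monoid[OF H]]
    by (auto simp: kernel_def group_hom_def group_hom_axioms_def intro: group_hom.hom_one)
  thus ?thesis using iso_kernel_image[OF H H'] f surj unfolding is_iso_def by blast
qed

lemma surjection_nontrivial_kernel_not_residually_nilpotent:
  assumes H: "group H" and H': "group H'" and fg: "finitely_generated H"
    and f: "f \<in> hom H H'" and surj: "f ` carrier H = carrier H'"
    and iso: "\<And>k. H Mod lcs H (Suc k) \<cong> H' Mod lcs H' (Suc k)"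
    and h: "h \<in> carrier H" "h \<noteq> \<one>\<^bsub>H\<^esub>" "f h = \<one>\<^bsub>H'\<^esub>"
  shows "\<not> residually_nilpotent H"
  using residually_nilpotentD[of H h] surjection_kernel_in_lcs[OF H H' fg f surj iso h(1,3)] h(2)
  by blast

text \<open>If an automorphism \<open>\<phi>\<close> of \<open>F\<close> satisfies \<open>K \<subseteq> \<phi>(N)\<close>, then \<open>x \<mapsto> \<phi>(x)K\<close> induces a
  surjection \<open>\<Gamma> = F/K \<rightarrow> F/N = G\<close>.\<close>

lemma type_I_surjection:
  assumes F: "group F" and \<Gamma>: "group \<Gamma>" and G: "group G"
    and pK: "pK \<in> hom F \<Gamma>" "pK ` carrier F = carrier \<Gamma>" "\<forall>x\<in>carrier F. pK x = \<one>\<^bsub>\<Gamma>\<^esub> \<longleftrightarrow> x \<in> K"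
    and pN: "pN \<in> hom F G" "pN ` carrier F = carrier G" "\<forall>x\<in>carrier F. pN x = \<one>\<^bsub>G\<^esub> \<longleftrightarrow> x \<in> N"
    and N: "N \<subseteq> carrier F" and \<phi>: "\<phi> \<in> iso F F" and KN: "K \<subseteq> \<phi> ` N"
  shows "\<exists>f \<in> hom \<Gamma> G. f ` carrier \<Gamma> = carrier G"
proof -
  have \<phi>_hom: "\<phi> \<in> hom F F" and \<phi>_surj: "\<phi> ` carrier F = carrier F" and \<phi>_inj: "inj_on \<phi> (carrier F)"
    using \<phi> by (auto simp: iso_iff)
  have "pK \<circ> \<phi> \<in> hom F \<Gamma>" using Group.hom_compose[OF \<phi>_hom pK(1)] .
  moreover have surj: "(pK \<circ> \<phi>) ` carrier F = carrier \<Gamma>" using \<phi>_surj pK(2) by (metis image_comp)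
  moreover have "pN x = \<one>\<^bsub>G\<^esub>" if x: "x \<in> carrier F" "(pK \<circ> \<phi>) x = \<one>\<^bsub>\<Gamma>\<^esub>" for x
  proof -
    have "\<phi> x \<in> K" using x pK(3) hom_in_carrier[OF \<phi>_hom x(1)] by simp
    then obtain n where "n \<in> N" "\<phi> x = \<phi> n" using KN by blast
    thus ?thesis using \<phi>_inj x(1) N pN(3) by (metis inj_onD subsetD)
  qed
  ultimately obtain f where f: "f \<in> hom \<Gamma> G" "\<forall>x\<in>carrier F. f ((pK \<circ> \<phi>) x) = pN x"
    using factor_through_surjection[OF F \<Gamma> G _ _ pN(1)] by blast
  have "f ` carrier \<Gamma> = pN ` carrier F" using f(2) surj by (force simp: image_iff)
  thus ?thesis using f(1) pN(2) by auto
qed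

text \<open>If \<open>\<phi>(N) \<subset> K\<close>, then \<open>xN \<mapsto> \<phi>(x)K\<close> is a surjection \<open>G \<rightarrow> \<Gamma>\<close>; any \<open>x\<close> with
  \<open>\<phi>(x) \<in> K - \<phi>(N)\<close> gives a nontrivial element of its kernel.\<close>

lemma type_II_surjection:
  assumes F: "group F" and \<Gamma>: "group \<Gamma>" and G: "group G"
    and pK: "pK \<in> hom F \<Gamma>" "pK ` carrier F = carrier \<Gamma>" "\<forall>x\<in>carrier F. pK x = \<one>\<^bsub>\<Gamma>\<^esub> \<longleftrightarrow> x \<in> K"
    and pN: "pN \<in> hom F G" "pN ` carrier F = carrier G" "\<forall>x\<in>carrier F. pN x = \<one>\<^bsub>G\<^esub> \<longleftrightarrow> x \<in> N"
    and K: "K \<subseteq> carrier F" and \<phi>: "\<phi> \<in> iso F F" and NK: "\<phi> ` N \<subset> K"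
  shows "\<exists>f \<in> hom G \<Gamma>. f ` carrier G = carrier \<Gamma> \<and> (\<exists>h\<in>carrier G. h \<noteq> \<one>\<^bsub>G\<^esub> \<and> f h = \<one>\<^bsub>\<Gamma>\<^esub>)"
proof -
  have \<phi>_hom: "\<phi> \<in> hom F F" and \<phi>_surj: "\<phi> ` carrier F = carrier F" using \<phi> by (auto simp: iso_iff)
  have "pK \<circ> \<phi> \<in> hom F \<Gamma>" using Group.hom_compose[OF \<phi>_hom pK(1)] .
  moreover have "(pK \<circ> \<phi>) x = \<one>\<^bsub>\<Gamma>\<^esub>" if x: "x \<in> carrier F" "pN x = \<one>\<^bsub>G\<^esub>" for x
  proof -
    have "\<phi> x \<in> K" using x pN(3) NK by blast
    thus ?thesis using pK(3) hom_in_carrier[OF \<phi>_hom x(1)] by simp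
  qed
  ultimately obtain f where f: "f \<in> hom G \<Gamma>" "\<forall>x\<in>carrier F. f (pN x) = (pK \<circ> \<phi>) x"
    using factor_through_surjection[OF F G \<Gamma> pN(1,2)] by blast
  have "f ` carrier G = (pK \<circ> \<phi>) ` carrier F" using f(2) pN(2)[symmetric] by (force simp: image_iff)
  hence surj: "f ` carrier G = carrier \<Gamma>" using \<phi>_surj pK(2) by (metis image_comp)
  obtain k where k: "k \<in> K" "k \<notin> \<phi> ` N" using NK by blast
  then obtain x where x: "x \<in> carrier F" "\<phi> x = k" using K \<phi>_surj by (metis imageE subsetD)
  have "x \<notin> N" using x k by blast
  hence "pN x \<in> carrier G" "pN x \<noteq> \<one>\<^bsub>G\<^esub>" using hom_in_carrier[OF pN(1) x(1)] pN(3) x(1) by auto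
  moreover have "f (pN x) = \<one>\<^bsub>\<Gamma>\<^esub>" using f(2) x k K pK(3) by auto
  ultimately show ?thesis using f(1) surj by blast
qed

text \<open>Type I: the surjection \<open>\<Gamma> \<rightarrow> G\<close> is injective by residual nilpotence
  of \<open>\<Gamma>\<close>.  Type II: the surjection \<open>G \<rightarrow> \<Gamma>\<close> has a nontrivial kernel inside every
  \<open>\<gamma>\<^sub>k(G)\<close>, as \<open>G\<close> is finitely generated (a quotient of \<open>F\<close>).\<close>

theorem mainTheorem3:
  fixes \<Gamma> :: "'g monoid" and F :: "'a monoid" and G :: "'h monoid"
    and K N :: "'a set"
  assumes "group \<Gamma>" "finitely_generated \<Gamma>" "residually_nilpotent \<Gamma>"
    and "free_group_of_rank F (group_rank \<Gamma>)"
    and "K \<lhd> F" "F Mod K \<cong> \<Gamma>"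
    and "N \<lhd> F" "group G" "F Mod N \<cong> G"
    and "weakly_para \<Gamma> G"
  shows "((\<exists>\<phi>\<in>iso F F. K \<subseteq> \<phi> ` N) \<longrightarrow> G \<cong> \<Gamma>)
       \<and> ((\<exists>\<phi>\<in>iso F F. \<phi> ` N \<subset> K) \<longrightarrow> \<not> residually_nilpotent G \<and> \<not> para \<Gamma> G)"
proof -
  note \<Gamma> = assms(1) and G = assms(8)
  have F: "group F" using assms(4) by (simp add: free_group_of_rank_def)
  have fg_F: "finitely_generated F"
    using assms(4) unfolding free_group_of_rank_def free_basis_def finitely_generated_def by blast
  obtain pK where pK: "pK \<in> hom F \<Gamma>" "pK ` carrier F = carrier \<Gamma>" "\<forall>x\<in>carrier F. pK x = \<one>\<^bsub>\<Gamma>\<^esub> \<longleftrightarrow> x \<in> K"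
    using quotient_map_from_iso[OF assms(5) \<Gamma> assms(6)] by blast
  obtain pN where pN: "pN \<in> hom F G" "pN ` carrier F = carrier G" "\<forall>x\<in>carrier F. pN x = \<one>\<^bsub>G\<^esub> \<longleftrightarrow> x \<in> N"
    using quotient_map_from_iso[OF assms(7) G assms(9)] by blast
  have fg_G: "finitely_generated G"
    using group_hom.finitely_generated_image[OF _ fg_F pN(2)] F G pN(1)
    by (simp add: group_hom_def group_hom_axioms_def)
  have lcs_G_\<Gamma>: "G Mod lcs G (Suc k) \<cong> \<Gamma> Mod lcs \<Gamma> (Suc k)" for k
    using assms(10) unfolding weakly_para_def by simp
  have lcs_\<Gamma>_G: "\<Gamma> Mod lcs \<Gamma> (Suc k) \<cong> G Mod lcs G (Suc k)" for k
    using group.iso_sym[OF normal.factorgroup_is_group[OF group.lcs_normal[OF G]] lcs_G_\<Gamma>] .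
  have sub: "K \<subseteq> carrier F" "N \<subseteq> carrier F"
    using assms(5,7) normal_imp_subgroup subgroup.subset by blast+
  show ?thesis
  proof (intro conjI impI)
    assume "\<exists>\<phi>\<in>iso F F. K \<subseteq> \<phi> ` N"
    then obtain \<phi> where "\<phi> \<in> iso F F" "K \<subseteq> \<phi> ` N" by blast
    then obtain f where "f \<in> hom \<Gamma> G" "f ` carrier \<Gamma> = carrier G"
      using type_I_surjection[OF F \<Gamma> G pK pN sub(2)] by blast
    hence "\<Gamma> \<cong> G" using surjection_iso_if_residually_nilpotent[OF \<Gamma> G assms(2,3)] lcs_\<Gamma>_G by blast
    thus "G \<cong> \<Gamma>" using group.iso_sym[OF \<Gamma>] by blast
  next
    assume "\<exists>\<phi>\<in>iso F F. \<phi> ` N \<subset> K"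
    then obtain \<phi> where "\<phi> \<in> iso F F" "\<phi> ` N \<subset> K" by blast
    then obtain f h where "f \<in> hom G \<Gamma>" "f ` carrier G = carrier \<Gamma>"
        "h \<in> carrier G" "h \<noteq> \<one>\<^bsub>G\<^esub>" "f h = \<one>\<^bsub>\<Gamma>\<^esub>"
      using type_II_surjection[OF F \<Gamma> G pK pN sub(1)] by meson
    thus "\<not> residually_nilpotent G"
      using surjection_nontrivial_kernel_not_residually_nilpotent[OF G \<Gamma> fg_G] lcs_G_\<Gamma> by blast
    thus "\<not> para \<Gamma> G" by (simp add: para_def)
  qed
qed

end
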